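(* Let $n\ge 2$ and let $a_1,\dots,a_n,b_1,\dots,b_n\in\{-1,+1\}$ be arbitrary. Define $\mathcal{S}_0=\sum_{i=1}^n a_i$, $\mathcal{S}_{00}=\sum_{i\neq j}a_ia_j$, $\mathcal{S}_{11}=\sum_{i\ne j}b_ib_j$, $\mathcal{S}_{01}=\sum_{i\neq j}a_ib_j$ (sums over ordered pairs $(i,j)$ of distinct indices in $\{1,\dots,n\}$). Then $$-2\mathcal{S}_0+\tfrac12\mathcal{S}_{00}-\mathcal{S}_{01}+\tfrac12\mathcal{S}_{11}+2n\ \ge\ 0.$$ Consequently, for every $n$-party local hidden variable model in which each party $i$ has two $\pm1$-valued observables $\mathcal{M}_0^{(i)},\mathcal{M}_1^{(i)}$, the same inequality holds with $\mathcal{S}_k=\sum_i\langle\mathcal{M}_k^{(i)}\rangle$ and $\mathcal{S}_{kl}=\sum_{i\ne j}\langle\mathcal{M}_k^{(i)}\mathcal{M}_l^{(j)}\rangle$.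
   Context: A local hidden variable (classical) model for $n$ parties each with two $\pm1$-valued measurements $k\in\{0,1\}$ is a probability distribution $q_\lambda$ over deterministic assignments $\lambda$ of values $\mathcal{M}_k^{(i)}(\lambda)\in\{\pm1\}$; expectation values are $\langle\prod \mathcal{M}\rangle=\sum_\lambda q_\lambda\prod\mathcal{M}(\lambda)$. Deterministic assignments correspond to $a_i=\mathcal{M}_0^{(i)}(\lambda)$, $b_i=\mathcal{M}_1^{(i)}(\lambda)$. *)

theory Defs
  imports Complex_Main
begin

definition pair_sum :: "nat \<Rightarrow> (nat \<Rightarrow> nat \<Rightarrow> real) \<Rightarrow> real" where
  "pair_sum n f = (\<Sum>i\<in>{1..n}. \<Sum>j\<in>{1..n} - {i}. f i j)"

definition bell_expr :: "nat \<Rightarrow> real \<Rightarrow> real \<Rightarrow> real \<Rightarrow> real \<Rightarrow> real" where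
  "bell_expr n S0 S00 S01 S11 = -2 * S0 + S00 / 2 - S01 + S11 / 2 + 2 * real n"

text \<open>Expectation value in a local hidden variable model given by a finite
  set of deterministic assignments Lam with weights q.\<close>
definition lhv_exp :: "'l set \<Rightarrow> ('l \<Rightarrow> real) \<Rightarrow> ('l \<Rightarrow> real) \<Rightarrow> real" where
  "lhv_exp Lam q g = (\<Sum>l\<in>Lam. q l * g l)"

text \<open>A local hidden variable model for parties 1..n with two +-1 observables each:
  M i k l is the value of observable k of party i under assignment l.\<close>
definition is_lhv_model :: "nat \<Rightarrow> 'l set \<Rightarrow> ('l \<Rightarrow> real) \<Rightarrow> (nat \<Rightarrow> nat \<Rightarrow> 'l \<Rightarrow> real) \<Rightarrow> bool" where
  "is_lhv_model n Lam q M \<longleftrightarrow> finite Lam \<and> (\<forall>l\<in>Lam. q l \<ge> 0) \<and> sum q Lam = 1 \<and>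
     (\<forall>i\<in>{1..n}. \<forall>k\<in>{0,1}. \<forall>l\<in>Lam. M i k l \<in> {-1, 1})"

end

theory Submission
  imports Defs
begin

text \<open>For deterministic values put \<open>A = \<Sum>a\<^sub>i\<close>, \<open>B = \<Sum>b\<^sub>i\<close>, \<open>C = \<Sum>a\<^sub>ib\<^sub>i\<close>. Since
  \<open>a\<^sub>i\<^sup>2 = b\<^sub>i\<^sup>2 = 1\<close>, the pair sums are \<open>A\<^sup>2 - n\<close>, \<open>AB - C\<close>, \<open>B\<^sup>2 - n\<close>, and the Bell
  expression becomes \<open>2D(D - 1) + \<Sum>(1 - a\<^sub>i)(1 - b\<^sub>i)\<close> with \<open>D = (A - B)/2\<close>.
  Both terms are nonnegative because \<open>D\<close> is an integer. A local hidden variable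
  model is a convex combination of deterministic assignments, and the Bell
  expression is affine in the correlators, so the bound carries over.\<close>

lemma pair_sum_mult:
  "pair_sum n (\<lambda>i j. f i * g j) = (\<Sum>i=1..n. f i) * (\<Sum>i=1..n. g i) - (\<Sum>i=1..n. f i * g i)"
proof -
  have "pair_sum n (\<lambda>i j. f i * g j) = (\<Sum>i=1..n. f i * (\<Sum>j=1..n. g j) - f i * g i)"
    unfolding pair_sum_def
    by (rule sum.cong) (auto simp: sum_diff1 sum_distrib_left[symmetric] algebra_simps)
  thus ?thesis by (simp add: sum_subtractf sum_distrib_right)
qed

lemma sum_square_sign:
  assumes "\<forall>i\<in>{1..n}. x i \<in> {-1, 1 :: real}"
  shows "(\<Sum>i=1..n. x i * x i) = real n"
  using assms by (subst sum.cong[of _ _ _ "\<lambda>_. 1"]) auto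

lemma Ints_mult_diff_one_nonneg:
  fixes x :: real
  assumes "x \<in> \<int>"
  shows "0 \<le> x * (x - 1)"
proof -
  obtain k where x: "x = of_int k" using assms by (auto elim: Ints_cases)
  have "0 \<le> k * (k - 1)"
    by (cases "k \<le> 0") (auto intro: mult_nonpos_nonpos)
  then have "0 \<le> real_of_int (k * (k - 1))" by linarith
  thus ?thesis by (simp add: x)
qed

lemma bell_expr_square_form:
  "bell_expr n A (A * A - real n) (A * B - C) (B * B - real n)
     = 2 * ((A - B) / 2 * ((A - B) / 2 - 1)) + (real n - A - B + C)"
  by (simp add: bell_expr_def field_simps)

lemma bell_expr_deterministic_nonneg:
  fixes a b :: "nat \<Rightarrow> real"
  assumes signs: "\<forall>i\<in>{1..n}. a i \<in> {-1, 1} \<and> b i \<in> {-1, 1}"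
  shows "bell_expr n (\<Sum>i=1..n. a i) (pair_sum n (\<lambda>i j. a i * a j))
           (pair_sum n (\<lambda>i j. a i * b j)) (pair_sum n (\<lambda>i j. b i * b j)) \<ge> 0"
proof -
  define A where "A = (\<Sum>i=1..n. a i)"
  define B where "B = (\<Sum>i=1..n. b i)"
  define C where "C = (\<Sum>i=1..n. a i * b i)"
  have "(A - B) / 2 = (\<Sum>i=1..n. (a i - b i) / 2)"
    by (simp add: A_def B_def sum_divide_distrib[symmetric] sum_subtractf)
  also have "\<dots> \<in> \<int>"
  proof (rule Ints_sum)
    fix i assume "i \<in> {1..n}"
    then have "a i \<in> {-1, 1}" "b i \<in> {-1, 1}" using signs by auto
    then have "(a i - b i) / 2 \<in> {-1, 0, 1}" by auto
    thus "(a i - b i) / 2 \<in> \<int>" by auto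
  qed
  finally have D_nonneg: "0 \<le> (A - B) / 2 * ((A - B) / 2 - 1)"
    by (rule Ints_mult_diff_one_nonneg)
  have "real n - A - B + C = (\<Sum>i=1..n. (1 - a i) * (1 - b i))"
    by (simp add: A_def B_def C_def algebra_simps sum.distrib sum_subtractf)
  also have "\<dots> \<ge> 0"
    using signs by (intro sum_nonneg mult_nonneg_nonneg) fastforce+
  finally have "0 \<le> real n - A - B + C" .
  with D_nonneg have "bell_expr n A (A * A - real n) (A * B - C) (B * B - real n) \<ge> 0"
    unfolding bell_expr_square_form by linarith
  moreover have "(\<Sum>i=1..n. a i * a i) = real n"
    by (rule sum_square_sign) (use signs in auto)
  moreover have "(\<Sum>i=1..n. b i * b i) = real n"
    by (rule sum_square_sign) (use signs in auto)
  ultimately show ?thesis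
    by (simp add: pair_sum_mult A_def B_def C_def)
qed

lemma lhv_exp_nonneg:
  assumes "\<forall>l\<in>Lam. q l \<ge> 0" and "\<And>l. l \<in> Lam \<Longrightarrow> g l \<ge> 0"
  shows "lhv_exp Lam q g \<ge> 0"
  unfolding lhv_exp_def using assms by (intro sum_nonneg) auto

lemma sum_lhv_exp:
  "(\<Sum>i=1..n. lhv_exp Lam q (h i)) = lhv_exp Lam q (\<lambda>l. \<Sum>i=1..n. h i l)"
  unfolding lhv_exp_def by (simp add: sum_distrib_left sum.swap[of _ Lam])

lemma pair_sum_lhv_exp:
  "pair_sum n (\<lambda>i j. lhv_exp Lam q (h i j)) = lhv_exp Lam q (\<lambda>l. pair_sum n (\<lambda>i j. h i j l))"
  unfolding pair_sum_def lhv_exp_def by (simp add: sum_distrib_left sum.swap[of _ Lam])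

lemma bell_expr_lhv_exp:
  assumes "sum q Lam = 1"
  shows "bell_expr n (lhv_exp Lam q x) (lhv_exp Lam q y) (lhv_exp Lam q z) (lhv_exp Lam q w)
           = lhv_exp Lam q (\<lambda>l. bell_expr n (x l) (y l) (z l) (w l))"
proof -
  have "lhv_exp Lam q (\<lambda>l. bell_expr n (x l) (y l) (z l) (w l))
      = (\<Sum>l\<in>Lam. -2 * (q l * x l) + q l * y l / 2 - q l * z l + q l * w l / 2
                    + q l * (2 * real n))"
    unfolding lhv_exp_def by (rule sum.cong) (auto simp: bell_expr_def algebra_simps)
  also have "\<dots> = -2 * lhv_exp Lam q x + lhv_exp Lam q y / 2 - lhv_exp Lam q z
                  + lhv_exp Lam q w / 2 + sum q Lam * (2 * real n)"
    unfolding lhv_exp_def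
    by (simp add: sum.distrib sum_subtractf sum_distrib_left sum_divide_distrib
                  sum_distrib_right sum_negf)
  finally show ?thesis using assms by (simp add: bell_expr_def)
qed

lemma bell_expr_lhv_nonneg:
  assumes model: "is_lhv_model n Lam q M"
  shows "bell_expr n (\<Sum>i=1..n. lhv_exp Lam q (M i 0))
           (pair_sum n (\<lambda>i j. lhv_exp Lam q (\<lambda>l. M i 0 l * M j 0 l)))
           (pair_sum n (\<lambda>i j. lhv_exp Lam q (\<lambda>l. M i 0 l * M j 1 l)))
           (pair_sum n (\<lambda>i j. lhv_exp Lam q (\<lambda>l. M i 1 l * M j 1 l))) \<ge> 0"
proof -
  have normalized: "sum q Lam = 1" using model by (simp add: is_lhv_model_def)
  show ?thesis
    unfolding sum_lhv_exp[where h = "\<lambda>i. M i 0"] pair_sum_lhv_exp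
      bell_expr_lhv_exp[OF normalized]
    using model unfolding is_lhv_model_def
    by (intro lhv_exp_nonneg bell_expr_deterministic_nonneg) auto
qed

theorem mainTheorem2:
  fixes n :: nat
  assumes "n \<ge> 2"
  shows "(\<forall>a b :: nat \<Rightarrow> real.
            (\<forall>i\<in>{1..n}. a i \<in> {-1, 1} \<and> b i \<in> {-1, 1}) \<longrightarrow>
            bell_expr n (\<Sum>i=1..n. a i)
                        (pair_sum n (\<lambda>i j. a i * a j))
                        (pair_sum n (\<lambda>i j. a i * b j))
                        (pair_sum n (\<lambda>i j. b i * b j)) \<ge> 0)
       \<and> (\<forall>(Lam :: 'l set) q M. is_lhv_model n Lam q M \<longrightarrow>
            bell_expr n (\<Sum>i=1..n. lhv_exp Lam q (M i 0))
                        (pair_sum n (\<lambda>i j. lhv_exp Lam q (\<lambda>l. M i 0 l * M j 0 l)))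
                        (pair_sum n (\<lambda>i j. lhv_exp Lam q (\<lambda>l. M i 0 l * M j 1 l)))
                        (pair_sum n (\<lambda>i j. lhv_exp Lam q (\<lambda>l. M i 1 l * M j 1 l))) \<ge> 0)"
  using bell_expr_deterministic_nonneg bell_expr_lhv_nonneg by blast

end
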